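(* Let $K,d\ge 1$ be integers and let $X\in\mathbb{R}^{K\times d}$ have rows $x_1,\dots,x_K\in\mathbb{R}^d$ that are affinely dependent, i.e. there exists a nonzero $\psi\in\mathbb{R}^K$ with $\sum_{i=1}^K\psi_i=0$ and $\sum_{i=1}^K\psi_i x_i=0$. Define $f:\Delta^K\to\Delta^d$ by $f(\alpha)=\operatorname{softmax}(\alpha^{T}X)$, where $\operatorname{softmax}(v)_c=e^{v_c}/\sum_{c'=1}^d e^{v_{c'}}$. Then $f$ is not injective.
   Context: $\Delta^K=\{\alpha\in\mathbb{R}^K:\alpha_i\ge 0,\ \sum_i\alpha_i=1\}$ denotes the probability simplex; $\alpha^T X\in\mathbb{R}^d$ is the convex combination $\sum_i\alpha_i x_i$ of the rows of $X$. *)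

theory Defs
  imports "HOL-Analysis.Analysis"
begin

definition prob_simplex :: "(real ^ 'n::finite) set" where
  "prob_simplex = {a. (\<forall>i. a $ i \<ge> 0) \<and> (\<Sum>i\<in>UNIV. a $ i) = 1}"

definition softmax :: "real ^ 'd::finite \<Rightarrow> real ^ 'd" where
  "softmax v = (\<chi> c. exp (v $ c) / (\<Sum>c'\<in>UNIV. exp (v $ c')))"

text \<open>alpha^T X = sum_i alpha_i x_i, where row i of X is X $ i.\<close>
definition conv_comb :: "real ^ 'k::finite \<Rightarrow> real ^ 'd ^ 'k \<Rightarrow> real ^ 'd" where
  "conv_comb a X = (\<Sum>i\<in>UNIV. a $ i *\<^sub>R X $ i)"

end

theory Submission
  imports Defs
begin

text \<open>The map \<open>\<alpha> \<mapsto> \<alpha>\<^sup>T X\<close> is linear and \<open>\<psi>\<close> lies in its kernel. Since \<open>\<Sum>\<^sub>i \<psi>\<^sub>i = 0\<close>, a small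
  step from the barycentre of the simplex in direction \<open>\<psi>\<close> stays in the simplex, so already
  \<open>\<alpha> \<mapsto> \<alpha>\<^sup>T X\<close> identifies two distinct points of \<open>\<Delta>\<^sup>K\<close>.\<close>

lemma linear_conv_comb: "linear (\<lambda>a. conv_comb a X)"
  unfolding conv_comb_def
  by (rule linearI) (simp_all add: sum.distrib scaleR_add_left scaleR_sum_right)

lemma barycentre_shift_in_prob_simplex:
  fixes \<psi> :: "real ^ 'n::finite"
  assumes "(\<Sum>i\<in>UNIV. \<psi> $ i) = 0"
  obtains t :: real where "t > 0" and "(\<chi> i. 1 / real CARD('n)) + t *\<^sub>R \<psi> \<in> prob_simplex"
proof
  have norm_pos: "1 + norm \<psi> > 0"
    by (simp add: add_pos_nonneg)
  define t where "t = 1 / (real CARD('n) * (1 + norm \<psi>))"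
  show t_pos: "t > 0"
    unfolding t_def using norm_pos by simp
  have bound: "\<bar>t * \<psi> $ i\<bar> \<le> 1 / real CARD('n)" for i
  proof -
    have "\<bar>t * \<psi> $ i\<bar> = t * \<bar>\<psi> $ i\<bar>"
      using t_pos by (simp add: abs_mult)
    also have "\<dots> \<le> t * (1 + norm \<psi>)"
      using component_le_norm_cart[of \<psi> i] t_pos by (intro mult_left_mono) auto
    also have "\<dots> = 1 / real CARD('n)"
      unfolding t_def using norm_pos by simp
    finally show ?thesis .
  qed
  have "0 \<le> 1 / real CARD('n) + t * \<psi> $ i" for i
    using abs_ge_minus_self[of "t * \<psi> $ i"] bound[of i] by linarith
  moreover have "(\<Sum>i\<in>UNIV. 1 / real CARD('n) + t * \<psi> $ i) = 1"
    using assms by (simp add: sum.distrib sum_distrib_left[symmetric])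
  ultimately show "(\<chi> i. 1 / real CARD('n)) + t *\<^sub>R \<psi> \<in> prob_simplex"
    unfolding prob_simplex_def by simp
qed

lemma not_inj_on_prob_simplex_if_kernel_direction:
  fixes g :: "real ^ 'n::finite \<Rightarrow> 'a::real_vector"
  assumes "linear g" and "g \<psi> = 0" and "\<psi> \<noteq> 0" and "(\<Sum>i\<in>UNIV. \<psi> $ i) = 0"
  shows "\<not> inj_on g prob_simplex"
proof
  assume inj: "inj_on g prob_simplex"
  define a :: "real ^ 'n" where "a = (\<chi> i. 1 / real CARD('n))"
  obtain t where "t > 0" and shift_mem: "a + t *\<^sub>R \<psi> \<in> prob_simplex"
    using barycentre_shift_in_prob_simplex[OF assms(4)] unfolding a_def by blast
  have a_mem: "a \<in> prob_simplex"
    using barycentre_shift_in_prob_simplex[of 0] unfolding a_def by simp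
  have "g (a + t *\<^sub>R \<psi>) = g a"
    using assms(1,2) by (simp add: linear_add linear_scale)
  then have "a + t *\<^sub>R \<psi> = a"
    using inj_onD[OF inj _ shift_mem a_mem] by blast
  with \<open>t > 0\<close> \<open>\<psi> \<noteq> 0\<close> show False
    by simp
qed

theorem mainTheorem2:
  fixes X :: "real ^ 'd::finite ^ 'k::finite"
  assumes "\<exists>\<psi> :: real ^ 'k. \<psi> \<noteq> 0 \<and> (\<Sum>i\<in>UNIV. \<psi> $ i) = 0
             \<and> (\<Sum>i\<in>UNIV. \<psi> $ i *\<^sub>R X $ i) = 0"
  shows "\<not> inj_on (\<lambda>a. softmax (conv_comb a X)) prob_simplex"
proof -
  obtain \<psi> :: "real ^ 'k" where "\<psi> \<noteq> 0" "(\<Sum>i\<in>UNIV. \<psi> $ i) = 0" "conv_comb \<psi> X = 0"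
    using assms unfolding conv_comb_def by blast
  then have "\<not> inj_on (\<lambda>a. conv_comb a X) prob_simplex"
    using not_inj_on_prob_simplex_if_kernel_direction[OF linear_conv_comb] by blast
  then show ?thesis
    using inj_on_imageI2[of softmax "\<lambda>a. conv_comb a X"] by (auto simp: comp_def)
qed

end
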